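(* Let $S$ be a numerical semigroup with $\mathrm{l}(S)=3$. Then $\mathrm{t}(S)\in\{2,3,4\}$. Moreover: (a) $\mathrm{t}(S)=2$ iff $\mathrm{h}(S)-\tfrac{\mathrm{F}(S)}{2}\in S$ iff $\mathrm{PF}(S)=\{\mathrm{F}(S),\mathrm{h}(S)\}$; (b) $\mathrm{t}(S)=3$ iff ($\mathrm{h}(S)-\tfrac{\mathrm{F}(S)}{2}\notin S$ and $2\mathrm{h}(S)-\mathrm{F}(S)\in S$) iff $\mathrm{PF}(S)=\{\mathrm{F}(S),\mathrm{h}(S),\tfrac{\mathrm{F}(S)}{2}\}$; (c) $\mathrm{t}(S)=4$ iff $2\mathrm{h}(S)-\mathrm{F}(S)\notin S$ iff $\mathrm{PF}(S)=\{\mathrm{F}(S),\mathrm{h}(S),\tfrac{\mathrm{F}(S)}{2},\mathrm{F}(S)-\mathrm{h}(S)\}$.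
   Context: A numerical semigroup is a subset $S\subseteq\mathbb{N}$ closed under addition with $0\in S$ and $\mathbb{N}\setminus S$ finite; $\mathrm{F}(S)=\max(\mathbb{Z}\setminus S)$. $\mathrm{N}(S)=\{s\in S\mid s<\mathrm{F}(S)\}$, $\mathrm{L}(S)=\{x\in\mathbb{N}\setminus S\mid \mathrm{F}(S)-x\notin \mathrm{N}(S)\}$, $\mathrm{l}(S)=\#\mathrm{L}(S)$. For $\mathrm{l}(S)\ge2$, $\mathrm{h}(S)=\max\{x\in\mathbb{N}\setminus S\mid \mathrm{F}(S)-x\in\mathbb{N}\setminus S,\ x\ne \mathrm{F}(S)/2\}$. $\mathrm{PF}(S)=\{x\in\mathbb{Z}\setminus S\mid x+s\in S \text{ for all } s\in S\setminus\{0\}\}$ and the type is $\mathrm{t}(S)=\#\mathrm{PF}(S)$. *)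

theory Defs
  imports Main
begin

definition numerical_semigroup :: "nat set \<Rightarrow> bool" where
  "numerical_semigroup S \<longleftrightarrow> 0 \<in> S \<and> (\<forall>a\<in>S. \<forall>b\<in>S. a + b \<in> S) \<and> finite (UNIV - S)"

definition inS :: "nat set \<Rightarrow> int \<Rightarrow> bool" where
  "inS S x \<longleftrightarrow> x \<in> int ` S"

definition frob :: "nat set \<Rightarrow> int" where
  "frob S = (GREATEST x::int. \<not> inS S x)"

definition Nset :: "nat set \<Rightarrow> int set" where
  "Nset S = {x. inS S x \<and> x < frob S}"

definition Lset :: "nat set \<Rightarrow> int set" where
  "Lset S = {x. 0 \<le> x \<and> \<not> inS S x \<and> frob S - x \<notin> Nset S}"

definition lnum :: "nat set \<Rightarrow> nat" where
  "lnum S = card (Lset S)"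

definition hnum :: "nat set \<Rightarrow> int" where
  "hnum S = Max {x. 0 \<le> x \<and> \<not> inS S x \<and> 0 \<le> frob S - x \<and> \<not> inS S (frob S - x)
                   \<and> 2 * x \<noteq> frob S}"

definition PF :: "nat set \<Rightarrow> int set" where
  "PF S = {x. \<not> inS S x \<and> (\<forall>s\<in>S. s \<noteq> 0 \<longrightarrow> inS S (x + int s))}"

definition stype :: "nat set \<Rightarrow> nat" where
  "stype S = card (PF S)"

end

theory Submission
  imports Defs
begin

text \<open>Every element of \<open>L(S)\<close> other than \<open>F(S)/2\<close> comes paired with its reflection \<open>F(S) - x\<close>,
  so \<open>l(S) = 3\<close> forces \<open>L(S) = {F/2, h, F - h}\<close> with \<open>h = h(S) > F/2\<close>. A gap \<open>x \<in> L(S)\<close> is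
  pseudo-Frobenius exactly when no translate \<open>x + s\<close>, \<open>0 \<noteq> s \<in> S\<close>, lands in \<open>L(S)\<close>, because a
  translate that is a gap but not in \<open>L(S)\<close> would put \<open>F - x\<close> into \<open>S\<close>. With only three
  elements this is decided by the two differences \<open>h - F/2\<close> and \<open>2h - F\<close>, and the first one
  lying in \<open>S\<close> forces the second, its double, to lie in \<open>S\<close>.\<close>

lemma inS_add: "numerical_semigroup S \<Longrightarrow> inS S x \<Longrightarrow> inS S y \<Longrightarrow> inS S (x + y)"
  unfolding numerical_semigroup_def inS_def
  by (auto, metis image_eqI of_nat_add)

lemma inS_nonneg: "inS S x \<Longrightarrow> 0 \<le> x"
  unfolding inS_def by auto

lemma inS_pos: "inS S s \<Longrightarrow> s \<noteq> 0 \<Longrightarrow> 0 < s"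
  using inS_nonneg[of S s] by simp

lemma inS_0: "numerical_semigroup S \<Longrightarrow> inS S 0"
  unfolding numerical_semigroup_def inS_def by force

lemma frob_not_inS_and_greatest:
  assumes "numerical_semigroup S"
  shows "\<not> inS S (frob S) \<and> (\<forall>y. \<not> inS S y \<longrightarrow> y \<le> frob S)"
proof -
  have "finite (UNIV - S)" using assms unfolding numerical_semigroup_def by auto
  then have fin: "finite (insert (-1) (int ` (UNIV - S)))" by auto
  define M where "M = Max (insert (-1) (int ` (UNIV - S)))"
  have M_gap: "\<not> inS S M"
  proof -
    have "M \<in> insert (-1) (int ` (UNIV - S))" unfolding M_def using fin by (rule Max_in) auto
    then show ?thesis unfolding inS_def by auto
  qed
  have M_ge: "y \<le> M" if "\<not> inS S y" for y
  proof (cases "y < 0")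
    case True
    have "-1 \<le> M" unfolding M_def using fin by auto
    then show ?thesis using True by auto
  next
    case False
    then have "y = int (nat y)" by auto
    moreover have "nat y \<notin> S" using that False unfolding inS_def
      by (metis calculation image_eqI)
    ultimately have "y \<in> int ` (UNIV - S)" by (metis DiffI UNIV_I image_eqI)
    then show ?thesis unfolding M_def using fin by auto
  qed
  have "frob S = M" unfolding frob_def using M_gap M_ge by (intro Greatest_equality) auto
  then show ?thesis using M_gap M_ge by auto
qed

lemma frob_not_inS: "numerical_semigroup S \<Longrightarrow> \<not> inS S (frob S)"
  using frob_not_inS_and_greatest by blast

lemma gap_le_frob: "numerical_semigroup S \<Longrightarrow> \<not> inS S y \<Longrightarrow> y \<le> frob S"
  using frob_not_inS_and_greatest by blast

lemma PF_iff: "x \<in> PF S \<longleftrightarrow> \<not> inS S x \<and> (\<forall>s. inS S s \<and> s \<noteq> 0 \<longrightarrow> inS S (x + s))"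
  unfolding PF_def inS_def by auto

lemma Lset_iff:
  assumes "numerical_semigroup S"
  shows "x \<in> Lset S \<longleftrightarrow> 0 \<le> x \<and> \<not> inS S x \<and> 0 \<le> frob S - x \<and> \<not> inS S (frob S - x)"
proof
  assume "x \<in> Lset S"
  then have x: "0 \<le> x" "\<not> inS S x" "\<not> (inS S (frob S - x) \<and> frob S - x < frob S)"
    unfolding Lset_def Nset_def by auto
  have "x \<noteq> 0" using x inS_0[OF assms] by auto
  moreover have "x \<le> frob S" using gap_le_frob[OF assms] x by auto
  ultimately show "0 \<le> x \<and> \<not> inS S x \<and> 0 \<le> frob S - x \<and> \<not> inS S (frob S - x)"
    using x by auto
qed (auto simp: Lset_def Nset_def)

lemma Lset_reflect: "numerical_semigroup S \<Longrightarrow> x \<in> Lset S \<Longrightarrow> frob S - x \<in> Lset S"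
  by (simp add: Lset_iff)

lemma frob_in_PF:
  assumes "numerical_semigroup S"
  shows "frob S \<in> PF S"
  unfolding PF_iff
proof (intro conjI allI impI frob_not_inS[OF assms])
  fix s assume "inS S s \<and> s \<noteq> 0"
  then have "0 < s" using inS_pos by blast
  then show "inS S (frob S + s)" using gap_le_frob[OF assms, of "frob S + s"] by linarith
qed

lemma PF_subset_insert_frob_Lset:
  assumes "numerical_semigroup S"
  shows "PF S \<subseteq> insert (frob S) (Lset S)"
proof
  fix x assume x: "x \<in> PF S"
  have x_gap: "\<not> inS S x" using x PF_iff by blast
  show "x \<in> insert (frob S) (Lset S)"
  proof (cases "x = frob S")
    case False
    have "\<not> inS S (frob S - x)"
    proof
      assume "inS S (frob S - x)"
      then have "inS S (x + (frob S - x))" using x False PF_iff by force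
      then show False using frob_not_inS[OF assms] by simp
    qed
    moreover have "x \<le> frob S" using gap_le_frob[OF assms] x_gap .
    moreover have "0 \<le> x" using gap_le_frob[OF assms] calculation by force
    ultimately show ?thesis using x_gap by (simp add: Lset_iff[OF assms])
  qed simp
qed

lemma Lset_add_gap:
  assumes "numerical_semigroup S" "x \<in> Lset S" "inS S s" "\<not> inS S (x + s)"
  shows "x + s \<in> Lset S"
proof -
  have "\<not> inS S (frob S - (x + s))"
  proof
    assume "inS S (frob S - (x + s))"
    then have "inS S (frob S - x)" using inS_add[OF assms(1) _ assms(3)] by fastforce
    then show False using assms(1,2) by (simp add: Lset_iff)
  qed
  moreover have "x + s \<le> frob S" using gap_le_frob[OF assms(1,4)] .
  ultimately show ?thesis using assms inS_nonneg[of S s] by (simp add: Lset_iff)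
qed

lemma Lset_in_PF_iff:
  assumes "numerical_semigroup S" "x \<in> Lset S"
  shows "x \<in> PF S \<longleftrightarrow> (\<forall>s. inS S s \<and> s \<noteq> 0 \<longrightarrow> x + s \<notin> Lset S)"
proof -
  have "\<not> inS S x" using assms by (simp add: Lset_iff)
  then show ?thesis
    unfolding PF_iff using Lset_add_gap[OF assms] by (auto simp: Lset_iff[OF assms(1)])
qed

lemma reflected_pair_eq:
  fixes b c F :: int
  assumes "b = F - c" "b \<noteq> c"
  obtains h where "{b, c} = {h, F - h}" "F < 2 * h"
proof (cases "b < c")
  case True
  then show ?thesis using that[of c] assms by (auto simp: insert_commute)
next
  case False
  then show ?thesis using that[of b] assms by auto
qed

lemma Lset_three:
  assumes "numerical_semigroup S" "lnum S = 3"
  obtains h where "Lset S = {frob S div 2, h, frob S - h}" "even (frob S)" "frob S < 2 * h"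
proof -
  define F where "F = frob S"
  have "\<exists>a b c. Lset S = {a, b, c} \<and> a \<noteq> b \<and> b \<noteq> c \<and> a \<noteq> c"
    using assms(2) unfolding lnum_def by (simp only: card_3_iff)
  then obtain a b c where abc: "Lset S = {a, b, c}" "a \<noteq> b" "b \<noteq> c" "a \<noteq> c"
    by blast
  have "F - x \<in> {a, b, c}" if "x \<in> {a, b, c}" for x
    using Lset_reflect[OF assms(1), of x] that unfolding abc(1) F_def by blast
  then have "F - a \<in> {a, b, c}" "F - b \<in> {a, b, c}" "F - c \<in> {a, b, c}" by blast+
  then have "(2*a = F \<and> b = F - c) \<or> (2*b = F \<and> a = F - c) \<or> (2*c = F \<and> a = F - b)"
    using abc(2-4) by (simp only: insert_iff empty_iff simp_thms) (elim disjE; linarith)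
  then have "\<exists>m b c. Lset S = {m, b, c} \<and> 2 * m = F \<and> b = F - c \<and> b \<noteq> c"
  proof (elim disjE)
    assume "2 * a = F \<and> b = F - c"
    then show ?thesis using abc by (intro exI[of _ a] exI[of _ b] exI[of _ c]) simp
  next
    assume "2 * b = F \<and> a = F - c"
    then show ?thesis using abc by (intro exI[of _ b] exI[of _ a] exI[of _ c]) auto
  next
    assume "2 * c = F \<and> a = F - b"
    then show ?thesis using abc by (intro exI[of _ c] exI[of _ a] exI[of _ b]) auto
  qed
  then obtain m b c where mbc: "Lset S = {m, b, c}" "2 * m = F" "b = F - c" "b \<noteq> c"
    by blast
  obtain h where "{b, c} = {h, F - h}" "F < 2 * h"
    using reflected_pair_eq mbc(3,4) by blast
  moreover have "m = F div 2" "even F" using mbc(2) by auto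
  ultimately show ?thesis using that mbc(1) unfolding F_def by (simp add: insert_commute)
qed

locale Lset_three_gaps =
  fixes S :: "nat set" and h :: int
  assumes semigroup: "numerical_semigroup S"
    and Lset_eq: "Lset S = {frob S div 2, h, frob S - h}"
    and even_frob: "even (frob S)"
    and frob_less_twice_h: "frob S < 2 * h"
begin

lemma gaps_ordered: "0 < frob S - h" "frob S - h < frob S div 2" "frob S div 2 < h"
proof -
  have "frob S - h \<in> Lset S" using Lset_eq by simp
  moreover have "inS S 0" using inS_0[OF semigroup] .
  ultimately have "frob S - h \<noteq> 0" "0 \<le> frob S - h" by (auto simp: Lset_iff[OF semigroup])
  then show "0 < frob S - h" by simp
  show "frob S - h < frob S div 2" "frob S div 2 < h" using even_frob frob_less_twice_h by auto
qed

lemma hnum_eq: "hnum S = h"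
proof -
  have "{x. 0 \<le> x \<and> \<not> inS S x \<and> 0 \<le> frob S - x \<and> \<not> inS S (frob S - x) \<and> 2 * x \<noteq> frob S}
      = {x \<in> Lset S. 2 * x \<noteq> frob S}"
    by (auto simp: Lset_iff[OF semigroup])
  also have "\<dots> = {h, frob S - h}"
    unfolding Lset_eq using even_frob frob_less_twice_h by auto
  finally show ?thesis unfolding hnum_def using gaps_ordered by simp
qed

lemma h_in_PF: "h \<in> PF S"
proof -
  have "h + s \<notin> Lset S" if "0 < s" for s
    unfolding Lset_eq using that gaps_ordered by auto
  then show ?thesis
    using Lset_in_PF_iff[OF semigroup, of h] Lset_eq inS_pos[of S] by simp
qed

lemma half_in_PF_iff: "frob S div 2 \<in> PF S \<longleftrightarrow> \<not> inS S (h - frob S div 2)"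
proof -
  have "frob S div 2 + s \<in> Lset S \<longleftrightarrow> s = h - frob S div 2" if "0 < s" for s
    unfolding Lset_eq using that gaps_ordered by auto
  moreover have "h - frob S div 2 \<noteq> 0" using gaps_ordered by simp
  ultimately show ?thesis
    using Lset_in_PF_iff[OF semigroup, of "frob S div 2"] Lset_eq inS_pos[of S] by auto
qed

lemma reflection_in_PF_iff:
  "frob S - h \<in> PF S \<longleftrightarrow> \<not> inS S (h - frob S div 2) \<and> \<not> inS S (2 * h - frob S)"
proof -
  have "frob S - h + s \<in> Lset S \<longleftrightarrow> s = h - frob S div 2 \<or> s = 2 * h - frob S"
    if "0 < s" for s
    unfolding Lset_eq using that gaps_ordered even_frob by auto
  moreover have "h - frob S div 2 \<noteq> 0" "2 * h - frob S \<noteq> 0" using gaps_ordered by auto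
  ultimately show ?thesis
    using Lset_in_PF_iff[OF semigroup, of "frob S - h"] Lset_eq inS_pos[of S] by auto
qed

lemma double_difference: "inS S (h - frob S div 2) \<Longrightarrow> inS S (2 * h - frob S)"
  using inS_add[OF semigroup, of "h - frob S div 2" "h - frob S div 2"] even_frob by auto

lemma PF_subset: "PF S \<subseteq> {frob S, h, frob S div 2, frob S - h}"
  using PF_subset_insert_frob_Lset[OF semigroup] Lset_eq by auto

end

theorem corollary17:
  assumes "numerical_semigroup S" and "lnum S = 3"
  shows "stype S \<in> {2, 3, 4}
    \<and> ((stype S = 2 \<longleftrightarrow> inS S (hnum S - frob S div 2))
       \<and> (inS S (hnum S - frob S div 2) \<longleftrightarrow> PF S = {frob S, hnum S}))
    \<and> ((stype S = 3 \<longleftrightarrow> (\<not> inS S (hnum S - frob S div 2) \<and> inS S (2 * hnum S - frob S)))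
       \<and> ((\<not> inS S (hnum S - frob S div 2) \<and> inS S (2 * hnum S - frob S))
            \<longleftrightarrow> PF S = {frob S, hnum S, frob S div 2}))
    \<and> ((stype S = 4 \<longleftrightarrow> \<not> inS S (2 * hnum S - frob S))
       \<and> (\<not> inS S (2 * hnum S - frob S)
            \<longleftrightarrow> PF S = {frob S, hnum S, frob S div 2, frob S - hnum S}))"
proof -
  obtain h where "Lset S = {frob S div 2, h, frob S - h}" "even (frob S)" "frob S < 2 * h"
    using Lset_three[OF assms] .
  then interpret Lset_three_gaps S h using assms(1) by unfold_locales
  have PF_bounds: "{frob S, h} \<subseteq> PF S" "PF S \<subseteq> {frob S, h, frob S div 2, frob S - h}"
    using frob_in_PF[OF assms(1)] h_in_PF PF_subset by auto
  have distinct: "frob S \<noteq> h" "frob S \<noteq> frob S div 2" "frob S \<noteq> frob S - h"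
    "h \<noteq> frob S div 2" "h \<noteq> frob S - h" "frob S div 2 \<noteq> frob S - h"
    using gaps_ordered by auto
  consider "inS S (h - frob S div 2)"
    | "\<not> inS S (h - frob S div 2)" "inS S (2 * h - frob S)"
    | "\<not> inS S (2 * h - frob S)"
    by blast
  then show ?thesis
  proof cases
    case 1
    then have "PF S = {frob S, h}"
      using PF_bounds half_in_PF_iff reflection_in_PF_iff by blast
    then show ?thesis using 1 double_difference distinct
      by (simp add: stype_def hnum_eq insert_eq_iff)
  next
    case 2
    then have "PF S = {frob S, h, frob S div 2}"
      using PF_bounds half_in_PF_iff reflection_in_PF_iff by blast
    then show ?thesis using 2 distinct by (simp add: stype_def hnum_eq insert_eq_iff)
  next
    case 3
    then have "\<not> inS S (h - frob S div 2)" using double_difference by blast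
    with 3 have "PF S = {frob S, h, frob S div 2, frob S - h}"
      using PF_bounds half_in_PF_iff reflection_in_PF_iff by blast
    then show ?thesis using 3 \<open>\<not> inS S (h - frob S div 2)\<close> distinct
      by (simp add: stype_def hnum_eq insert_eq_iff)
  qed
qed

end
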